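(* Let $M$ be a matroid of rank $r$ on $E=\{0,\dots,n\}$. Then \[ \int_{X_E} c_{r-1}(\mathcal S_M^\vee)\,c_{|E|-r}(\mathcal Q_M) = \beta(M) \quad\text{and}\quad \int_{X_E} c_{r}(\mathcal S_M^\vee)\,c_{|E|-r-1}(\mathcal Q_M) = \beta(M^\perp), \] with the convention $c_{-1}=0$.
   Context: $X_E$ is the $n$-dimensional permutohedral variety (toric variety of the fan in $\mathbb R^E/\mathbb R\mathbf 1$ with cones $\operatorname{Cone}(\overline{\mathbf e}_{S_1},\dots,\overline{\mathbf e}_{S_k})$ for chains $\emptyset\subsetneq S_1\subsetneq\cdots\subsetneq S_k\subsetneq E$), with $T=(\mathbb C^* )^E$-fixed points $p_\sigma$ indexed by permutations $\sigma$ of $E$; $K_T^0(X_E)$ embeds into $\prod_\sigma\mathbb Z[T_0^{\pm1},\dots,T_n^{\pm1}]$ by restriction. For a matroid $M$ and permutation $\sigma$, $B_\sigma(M)$ is the lexicographically first basis for the order $\sigma(0)\prec\cdots\prec\sigma(n)$, and $[\mathcal S_M],[\mathcal Q_M]\in K_T^0(X_E)$ are the classes with restrictions $\sum_{i\in B_\sigma(M)}T_i^{-1}$ and $\sum_{i\notin B_\sigma(M)}T_i^{-1}$ at $p_\sigma$; $\vee$ denotes the dual and $c_k$ the non-equivariant Chern class. $\beta(M)$ and $\beta(M^\perp)$ are the coefficients of $x$ and of $y$, respectively, in the Tutte polynomial $T_M(x,y)$; $M^\perp$ is the dual matroid. *)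

theory Defs
  imports "HOL-Combinatorics.Permutations" "HOL-Computational_Algebra.Polynomial"
          "HOL-Library.Multiset" Complex_Main
begin

definition matroid :: "'a set \<Rightarrow> 'a set set \<Rightarrow> bool" where
  "matroid E \<B> \<longleftrightarrow> finite E \<and> \<B> \<noteq> {} \<and> (\<forall>B\<in>\<B>. B \<subseteq> E) \<and>
     (\<forall>B1\<in>\<B>. \<forall>B2\<in>\<B>. \<forall>x\<in>B1 - B2. \<exists>y\<in>B2 - B1. insert y (B1 - {x}) \<in> \<B>)"

definition mrank :: "'a set set \<Rightarrow> 'a set \<Rightarrow> nat" where
  "mrank \<B> A = Max ((\<lambda>B. card (B \<inter> A)) ` \<B>)"

definition dual_matroid :: "'a set \<Rightarrow> 'a set set \<Rightarrow> 'a set set" where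
  "dual_matroid E \<B> = (\<lambda>B. E - B) ` \<B>"

text \<open>Tutte polynomial T_M(x,y) as a polynomial in x whose coefficients are
  polynomials in y:  sum over A of (x-1)^(r - rk A) (y-1)^(|A| - rk A).\<close>
definition tutte :: "'a set \<Rightarrow> 'a set set \<Rightarrow> int poly poly" where
  "tutte E \<B> = (\<Sum>A\<in>Pow E. [:-1, 1:] ^ (mrank \<B> E - mrank \<B> A)
                          * [: [:-1, 1:] ^ (card A - mrank \<B> A) :])"

definition beta :: "'a set \<Rightarrow> 'a set set \<Rightarrow> int" where
  "beta E \<B> = coeff (coeff (tutte E \<B>) 1) 0"

definition pos_list :: "(nat \<Rightarrow> nat) \<Rightarrow> nat set \<Rightarrow> nat list" where
  "pos_list \<sigma> B = sorted_list_of_set (inv \<sigma> ` B)"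

definition lex_first_basis :: "nat set set \<Rightarrow> (nat \<Rightarrow> nat) \<Rightarrow> nat set" where
  "lex_first_basis \<B> \<sigma> = (THE B. B \<in> \<B> \<and>
      (\<forall>B'\<in>\<B>. B' \<noteq> B \<longrightarrow> (pos_list \<sigma> B, pos_list \<sigma> B') \<in> lexord {(a, b). a < b}))"

text \<open>A character of T = (C^*)^E is a Laurent monomial T^a, encoded by its exponent
  vector a.  The restriction of an equivariant vector bundle class to p_sigma is a
  multiset of characters; a class is given by its restrictions at all p_sigma.\<close>
type_synonym character = "nat \<Rightarrow> int"
type_synonym Kclass = "(nat \<Rightarrow> nat) \<Rightarrow> character multiset"

definition char_inv :: "nat \<Rightarrow> character" where
  "char_inv i = (\<lambda>j. if j = i then -1 else 0)"

definition class_S :: "nat \<Rightarrow> nat set set \<Rightarrow> Kclass" where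
  "class_S n \<B> = (\<lambda>\<sigma>. image_mset char_inv (mset_set (lex_first_basis \<B> \<sigma>)))"

definition class_Q :: "nat \<Rightarrow> nat set set \<Rightarrow> Kclass" where
  "class_Q n \<B> = (\<lambda>\<sigma>. image_mset char_inv (mset_set ({0..n} - lex_first_basis \<B> \<sigma>)))"

definition Kdual :: "Kclass \<Rightarrow> Kclass" where
  "Kdual F = (\<lambda>\<sigma>. image_mset (\<lambda>a j. - a j) (F \<sigma>))"

text \<open>Equivariant cohomology classes are given by their restrictions at p_sigma,
  polynomial functions of the equivariant parameters t = (t_0,...,t_n).  The
  character T^a has equivariant first Chern class sum_j a_j t_j.\<close>
definition char_weight :: "nat \<Rightarrow> character \<Rightarrow> (nat \<Rightarrow> real) \<Rightarrow> real" where
  "char_weight n a t = (\<Sum>j\<in>{0..n}. real_of_int (a j) * t j)"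

definition chern :: "nat \<Rightarrow> int \<Rightarrow> Kclass \<Rightarrow> (nat \<Rightarrow> nat) \<Rightarrow> (nat \<Rightarrow> real) \<Rightarrow> real" where
  "chern n k F \<sigma> t = (if k < 0 then 0
     else coeff (\<Prod>a\<in>#F \<sigma>. [:1, char_weight n a t:]) (nat k))"

text \<open>Atiyah--Bott localization on X_E: the tangent weights at p_sigma are
  t_sigma(i) - t_sigma(i+1), i < n.\<close>
definition loc_integral :: "nat \<Rightarrow> ((nat \<Rightarrow> nat) \<Rightarrow> (nat \<Rightarrow> real) \<Rightarrow> real) \<Rightarrow> (nat \<Rightarrow> real) \<Rightarrow> real" where
  "loc_integral n f t = (\<Sum>\<sigma>\<in>{\<sigma>. \<sigma> permutes {0..n}}.
       f \<sigma> t / (\<Prod>i<n. t (\<sigma> i) - t (\<sigma> (Suc i))))"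

text \<open>"integral over X_E of the (degree n) class f equals v": the localization
  sum is identically v at all generic parameters.  For a class of degree n this is
  the non-equivariant degree.\<close>
definition XE_integral_eq :: "nat \<Rightarrow> ((nat \<Rightarrow> nat) \<Rightarrow> (nat \<Rightarrow> real) \<Rightarrow> real) \<Rightarrow> real \<Rightarrow> bool" where
  "XE_integral_eq n f v \<longleftrightarrow> (\<forall>t. inj_on t {0..n} \<longrightarrow> loc_integral n f t = v)"

end

(*
  At the fixed point p_sigma the Chern roots of S^vee are the t_i with i in B = B_sigma(M), and
  those of Q are the -t_i with i not in B.  Hence c_(r-1)(S^vee) c_(|E|-r)(Q) restricts to
  +-sum_(b in B) prod_(j ~= b) t_j, and c_r(S^vee) c_(|E|-r-1)(Q) to -+sum_(b notin B) prod_(j ~= b) t_j.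
  By the greedy property of B, an element b lies in B exactly when the rank jumps on adding b to
  the set P of elements preceding b in the order sigma.

  Summing over sigma against the localization denominators, the orderings with a given P
  contribute (-1)^|P| / prod_(j ~= b) (t_b - t_j): the orderings of P and of the elements after b
  are summed separately by a partial-fraction identity that comes from Lagrange interpolation.
  The b-th term thus becomes the alternating sum over P of the rank jumps, which equals
  -sum_A (-1)^|A| rk A, i.e. -+beta(M) by Crapo's formula, independently of b.  A last Lagrange
  identity, sum_b prod_(j ~= b) t_j / prod_(j ~= b) (t_b - t_j) = (-1)^n, removes t.  Passing to the
  complement of B gives the second integral, because beta(M^perp) = beta(M) -+ [|E| = 1].
*)
theory Submission
  imports Defs "HOL-Combinatorics.Multiset_Permutations" "HOL-Library.List_Lexorder"
begin

lemma matroid_basis_subset: "matroid E \<B> \<Longrightarrow> B \<in> \<B> \<Longrightarrow> B \<subseteq> E"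
  unfolding matroid_def by blast

lemma matroid_finite_basis: "matroid E \<B> \<Longrightarrow> B \<in> \<B> \<Longrightarrow> finite B"
  unfolding matroid_def by (meson finite_subset)

lemma matroid_finite_bases: "matroid E \<B> \<Longrightarrow> finite \<B>"
  unfolding matroid_def by (meson Pow_iff finite_Pow_iff finite_subset subsetI)

lemma matroid_exchange:
  "matroid E \<B> \<Longrightarrow> B1 \<in> \<B> \<Longrightarrow> B2 \<in> \<B> \<Longrightarrow> x \<in> B1 - B2 \<Longrightarrow>
     \<exists>y\<in>B2 - B1. insert y (B1 - {x}) \<in> \<B>"
  unfolding matroid_def by blast

lemma matroid_card_basis_eq:
  assumes M: "matroid E \<B>" and "B1 \<in> \<B>" "B2 \<in> \<B>"
  shows "card B1 = card B2"
  using assms(2)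
proof (induction "card (B1 - B2)" arbitrary: B1 rule: less_induct)
  case less
  have fin: "finite B1" "finite B2" using M less.prems assms(3) matroid_finite_basis by blast+
  show ?case
  proof (cases "B1 - B2 = {}")
    case True
    have "B2 - B1 = {}"
      using matroid_exchange[OF M assms(3) less.prems] True by blast
    with True show ?thesis by (metis Diff_eq_empty_iff subset_antisym)
  next
    case False
    then obtain x where x: "x \<in> B1 - B2" by blast
    then obtain y where y: "y \<in> B2 - B1" and B1': "insert y (B1 - {x}) \<in> \<B>"
      using matroid_exchange[OF M less.prems assms(3)] by blast
    have "insert y (B1 - {x}) - B2 = (B1 - B2) - {x}" using x y by auto
    then have "card (insert y (B1 - {x}) - B2) < card (B1 - B2)"
      using x fin by (metis card_Diff1_less finite_Diff)
    then have "card (insert y (B1 - {x})) = card B2" using less.hyps B1' by blast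
    moreover have "card (insert y (B1 - {x})) = card B1"
      using x y fin by (metis DiffD1 DiffD2 DiffE card_Suc_Diff1 card_insert_disjoint finite_Diff)
    ultimately show ?thesis by simp
  qed
qed

lemma mrank_basis:
  assumes M: "matroid E \<B>" and B: "B \<in> \<B>"
  shows "mrank \<B> E = card B"
proof -
  have "card (B' \<inter> E) = card B" if "B' \<in> \<B>" for B'
    using that matroid_card_basis_eq[OF M that B] matroid_basis_subset[OF M that]
    by (simp add: Int_absorb2)
  then have "(\<lambda>B'. card (B' \<inter> E)) ` \<B> = {card B}"
    using B by (auto intro: rev_image_eqI)
  then show ?thesis unfolding mrank_def by simp
qed

lemma mrank_le_card: "finite A \<Longrightarrow> \<B> \<noteq> {} \<Longrightarrow> finite \<B> \<Longrightarrow> mrank \<B> A \<le> card A"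
  unfolding mrank_def by (auto intro: card_mono)

lemma matroid_mrank_le_card:
  assumes "matroid E \<B>"
  shows "mrank \<B> E \<le> card E"
  using assms mrank_le_card[of E \<B>] matroid_finite_bases[OF assms] by (simp add: matroid_def)

lemma mrank_mono: "A \<subseteq> A' \<Longrightarrow> finite A' \<Longrightarrow> \<B> \<noteq> {} \<Longrightarrow> finite \<B> \<Longrightarrow> mrank \<B> A \<le> mrank \<B> A'"
  unfolding mrank_def
  by (simp add: Max_le_iff) (meson Max_ge card_mono finite_Int finite_imageI imageI inf_mono order_trans order_refl)

lemma mrank_empty: "\<B> \<noteq> {} \<Longrightarrow> mrank \<B> {} = 0"
  unfolding mrank_def by (simp add: image_constant_conv)

lemma mrank_dual_matroid:
  assumes M: "matroid E \<B>" and A: "A \<subseteq> E"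
  shows "mrank (dual_matroid E \<B>) A + mrank \<B> E = card A + mrank \<B> (E - A)"
proof -
  have fin: "finite E" "finite \<B>" "\<B> \<noteq> {}"
    using M matroid_finite_bases unfolding matroid_def by auto
  have count: "card ((E - B) \<inter> A) + mrank \<B> E = card (B \<inter> (E - A)) + card A" if B: "B \<in> \<B>" for B
  proof -
    have "finite A" "finite B" using A B fin matroid_basis_subset[OF M B] finite_subset by auto
    moreover have "(E - B) \<inter> A = A - B" "B \<inter> (E - A) = B - A"
      using A matroid_basis_subset[OF M B] by auto
    ultimately show ?thesis
      using mrank_basis[OF M B] card_Int_Diff[of A B] card_Int_Diff[of B A] by (simp add: Int_commute)
  qed
  have "mrank (dual_matroid E \<B>) A = Max ((\<lambda>B. card ((E - B) \<inter> A)) ` \<B>)"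
    by (simp add: mrank_def dual_matroid_def image_image)
  then have "mrank (dual_matroid E \<B>) A + mrank \<B> E = Max ((\<lambda>B. card ((E - B) \<inter> A) + mrank \<B> E) ` \<B>)"
    by (simp add: Max_add_commute fin)
  also have "\<dots> = Max ((\<lambda>B. card (B \<inter> (E - A)) + card A) ` \<B>)"
    using count by (simp cong: image_cong)
  also have "\<dots> = card A + mrank \<B> (E - A)"
    by (simp add: Max_add_commute fin mrank_def)
  finally show ?thesis .
qed

lemma sorted_list_of_set_less:
  fixes X Y :: "'a::linorder set"
  assumes "finite X" "finite Y" "card X = card Y" "m \<in> X" "m \<notin> Y"
    and "\<And>z. z < m \<Longrightarrow> z \<in> X \<longleftrightarrow> z \<in> Y"
  shows "sorted_list_of_set X < sorted_list_of_set Y"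
  using assms
proof (induction "card X" arbitrary: X Y)
  case 0
  then show ?case by auto
next
  case (Suc k)
  have ne: "X \<noteq> {}" "Y \<noteq> {}" using Suc.prems Suc.hyps(2) by auto
  define a b where "a = Min X" and "b = Min Y"
  have ab: "a \<in> X" "b \<in> Y" "\<And>x. x \<in> X \<Longrightarrow> a \<le> x" "\<And>y. y \<in> Y \<Longrightarrow> b \<le> y"
    using Suc.prems ne by (auto simp: a_def b_def)
  have lists: "sorted_list_of_set X = a # sorted_list_of_set (X - {a})"
    "sorted_list_of_set Y = b # sorted_list_of_set (Y - {b})"
    using Suc.prems ne by (simp_all add: a_def b_def sorted_list_of_set_nonempty)
  show ?case
  proof (cases "a = b")
    case True
    then have "a \<noteq> m" using ab Suc.prems by auto
    then have "sorted_list_of_set (X - {a}) < sorted_list_of_set (Y - {a})"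
      using Suc ab True by (intro Suc.hyps) auto
    then show ?thesis using lists True by simp
  next
    case False
    have "a = m" "m < b"
      using ab Suc.prems False by (metis le_less_trans not_le order.antisym)+
    then show ?thesis using lists by simp
  qed
qed

lemma pos_list_inj:
  assumes "bij \<sigma>" "finite A" "finite B" "pos_list \<sigma> A = pos_list \<sigma> B"
  shows "A = B"
proof -
  have "inv \<sigma> ` A = inv \<sigma> ` B"
    using assms by (metis finite_imageI pos_list_def sorted_list_of_set.idem_if_sorted_distinct
        sorted_list_of_set(1))
  then show ?thesis using assms(1) bij_imp_bij_inv bij_is_inj inj_image_eq_iff by metis
qed

lemma lex_first_basis_eqI:
  assumes "B0 \<in> \<B>" "\<And>B. B \<in> \<B> \<Longrightarrow> B \<noteq> B0 \<Longrightarrow> pos_list \<sigma> B0 < pos_list \<sigma> B"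
  shows "lex_first_basis \<B> \<sigma> = B0"
  unfolding lex_first_basis_def list_less_def[symmetric]
proof (rule the_equality)
  show "B0 \<in> \<B> \<and> (\<forall>B\<in>\<B>. B \<noteq> B0 \<longrightarrow> pos_list \<sigma> B0 < pos_list \<sigma> B)"
    using assms by blast
  show "B = B0" if "B \<in> \<B> \<and> (\<forall>B'\<in>\<B>. B' \<noteq> B \<longrightarrow> pos_list \<sigma> B < pos_list \<sigma> B')" for B
    using that assms(1) assms(2)[of B] by (auto dest: less_asym)
qed

lemma lex_first_basis_least:
  assumes M: "matroid E \<B>" and \<sigma>: "bij \<sigma>"
  shows "lex_first_basis \<B> \<sigma> \<in> \<B>"
    and "B \<in> \<B> \<Longrightarrow> pos_list \<sigma> (lex_first_basis \<B> \<sigma>) \<le> pos_list \<sigma> B"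
proof -
  have fin: "finite (pos_list \<sigma> ` \<B>)" "pos_list \<sigma> ` \<B> \<noteq> {}"
    using matroid_finite_bases[OF M] M unfolding matroid_def by auto
  obtain B0 where B0: "B0 \<in> \<B>" "pos_list \<sigma> B0 = Min (pos_list \<sigma> ` \<B>)"
    using Min_in[OF fin] by (metis imageE)
  have "lex_first_basis \<B> \<sigma> = B0"
  proof (rule lex_first_basis_eqI[OF B0(1)])
    fix B assume "B \<in> \<B>" "B \<noteq> B0"
    then show "pos_list \<sigma> B0 < pos_list \<sigma> B"
      using B0 fin pos_list_inj[OF \<sigma>] matroid_finite_basis[OF M] by (metis Min_le image_eqI order_le_less)
  qed
  then show "lex_first_basis \<B> \<sigma> \<in> \<B>" "B \<in> \<B> \<Longrightarrow> pos_list \<sigma> (lex_first_basis \<B> \<sigma>) \<le> pos_list \<sigma> B"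
    using B0 fin by auto
qed

lemma lex_first_basis_exchange:
  assumes M: "matroid E \<B>" and \<sigma>: "bij \<sigma>"
    and x: "x \<in> lex_first_basis \<B> \<sigma>" and y: "y \<notin> lex_first_basis \<B> \<sigma>"
    and B: "insert y (lex_first_basis \<B> \<sigma> - {x}) \<in> \<B>"
  shows "inv \<sigma> x < inv \<sigma> y"
proof (rule ccontr)
  define B0 where "B0 = lex_first_basis \<B> \<sigma>"
  define B where "B = insert y (B0 - {x})"
  have inj: "inj (inv \<sigma>)" using \<sigma> bij_imp_bij_inv bij_is_inj by blast
  have fin: "finite B0" using lex_first_basis_least(1)[OF M \<sigma>] M matroid_finite_basis B0_def by blast
  assume "\<not> inv \<sigma> x < inv \<sigma> y"
  moreover have "x \<noteq> y" using x y by blast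
  ultimately have yx: "inv \<sigma> y < inv \<sigma> x" using inj by (metis injD linorder_neqE_nat)
  have "pos_list \<sigma> B < pos_list \<sigma> B0"
    unfolding pos_list_def
  proof (rule sorted_list_of_set_less[where m = "inv \<sigma> y"])
    show "finite (inv \<sigma> ` B)" "finite (inv \<sigma> ` B0)" using fin B_def by auto
    have "card B = card B0"
      unfolding B_def B0_def by (rule matroid_card_basis_eq[OF M B lex_first_basis_least(1)[OF M \<sigma>]])
    then show "card (inv \<sigma> ` B) = card (inv \<sigma> ` B0)"
      using inj by (simp add: card_image inj_on_subset)
    show "inv \<sigma> y \<in> inv \<sigma> ` B" "inv \<sigma> y \<notin> inv \<sigma> ` B0"
      using y inj B_def B0_def by (auto dest: injD)
    show "z \<in> inv \<sigma> ` B \<longleftrightarrow> z \<in> inv \<sigma> ` B0" if "z < inv \<sigma> y" for z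
      using that yx x B_def B0_def by auto
  qed
  then show False
    using lex_first_basis_least(2)[OF M \<sigma> B] B0_def B_def by simp
qed

lemma card_segment_le_lex_first_basis_of_diff_subset:
  assumes M: "matroid E \<B>" and \<sigma>: "bij \<sigma>" and B: "B \<in> \<B>"
    and diff: "B - lex_first_basis \<B> \<sigma> \<subseteq> {e. inv \<sigma> e < k}"
  shows "card (B \<inter> {e. inv \<sigma> e < k}) \<le> card (lex_first_basis \<B> \<sigma> \<inter> {e. inv \<sigma> e < k})"
proof (rule ccontr)
  define B0 P where "B0 = lex_first_basis \<B> \<sigma>" and "P = {e. inv \<sigma> e < k}"
  assume more: "\<not> ?thesis"
  have B0: "B0 \<in> \<B>" using lex_first_basis_least(1)[OF M \<sigma>] B0_def by blast
  have "\<exists>x\<in>B0 - B. x \<notin> P"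
  proof (rule ccontr)
    assume "\<not> (\<exists>x\<in>B0 - B. x \<notin> P)"
    with diff have "B - P = B0 - P" by (auto simp: B0_def P_def)
    moreover have "finite B" "finite B0" using B B0 M matroid_finite_basis by blast+
    moreover have "card B = card B0" using matroid_card_basis_eq[OF M B B0] .
    ultimately have "card (B \<inter> P) = card (B0 \<inter> P)"
      using card_Int_Diff[of B P] card_Int_Diff[of B0 P] by simp
    with more show False by (simp add: B0_def P_def)
  qed
  then obtain x where x: "x \<in> B0 - B" "x \<notin> P" by blast
  then obtain y where y: "y \<in> B - B0" and B': "insert y (B0 - {x}) \<in> \<B>"
    using matroid_exchange[OF M B0 B] by blast
  have "inv \<sigma> x < inv \<sigma> y"
    using lex_first_basis_exchange[OF M \<sigma>] x y B' B0_def by blast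
  moreover have "y \<in> P" using y diff B0_def P_def by blast
  ultimately show False using x P_def by simp
qed

lemma card_segment_le_lex_first_basis:
  assumes M: "matroid E \<B>" and \<sigma>: "bij \<sigma>" and B: "B \<in> \<B>"
  shows "card (B \<inter> {e. inv \<sigma> e < k}) \<le> card (lex_first_basis \<B> \<sigma> \<inter> {e. inv \<sigma> e < k})"
  using B
proof (induction "card (B - lex_first_basis \<B> \<sigma>)" arbitrary: B rule: less_induct)
  case less
  define B0 P where "B0 = lex_first_basis \<B> \<sigma>" and "P = {e. inv \<sigma> e < k}"
  have B0: "B0 \<in> \<B>" using lex_first_basis_least(1)[OF M \<sigma>] B0_def by blast
  show ?case
  proof (cases "B - B0 \<subseteq> P")
    case False
    then obtain x where x: "x \<in> B - B0" "x \<notin> P" by blast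
    then obtain y where y: "y \<in> B0 - B" and B': "insert y (B - {x}) \<in> \<B>"
      using matroid_exchange[OF M less.prems B0] by blast
    have fin: "finite B" using less.prems M matroid_finite_basis by blast
    have "insert y (B - {x}) - B0 = (B - B0) - {x}" using x y by auto
    then have "card (insert y (B - {x}) - B0) < card (B - B0)"
      using x fin by (metis card_Diff1_less finite_Diff)
    then have "card (insert y (B - {x}) \<inter> P) \<le> card (B0 \<inter> P)"
      using less.hyps B' B0_def P_def by blast
    moreover have "card (B \<inter> P) \<le> card (insert y (B - {x}) \<inter> P)"
      using x fin by (intro card_mono) auto
    ultimately show ?thesis using B0_def P_def by simp
  next
    case True
    then show ?thesis
      using card_segment_le_lex_first_basis_of_diff_subset[OF M \<sigma> less.prems] B0_def P_def by blast
  qed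
qed

lemma mrank_segment:
  assumes M: "matroid E \<B>" and \<sigma>: "bij \<sigma>"
  shows "mrank \<B> {e. inv \<sigma> e < k} = card (lex_first_basis \<B> \<sigma> \<inter> {e. inv \<sigma> e < k})"
  unfolding mrank_def
  by (rule Max_eqI) (use matroid_finite_bases[OF M] lex_first_basis_least(1)[OF M \<sigma>]
      card_segment_le_lex_first_basis[OF M \<sigma>] in auto)

lemma lex_first_basis_subset_card:
  assumes M: "matroid E \<B>" and \<sigma>: "bij \<sigma>"
  shows "lex_first_basis \<B> \<sigma> \<subseteq> E" "card (lex_first_basis \<B> \<sigma>) = mrank \<B> E"
  using matroid_basis_subset[OF M lex_first_basis_least(1)[OF M \<sigma>]]
    mrank_basis[OF M lex_first_basis_least(1)[OF M \<sigma>]] by simp_all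

text \<open>The elements before \<open>b\<close> in the order \<open>\<sigma> 0 \<prec> \<sigma> 1 \<prec> \<dots>\<close>, since \<open>inv \<sigma> e\<close> is the position of \<open>e\<close>.\<close>
definition preceding :: "(nat \<Rightarrow> nat) \<Rightarrow> nat \<Rightarrow> nat set" where
  "preceding \<sigma> b = {e. inv \<sigma> e < inv \<sigma> b}"

lemma mrank_insert_preceding:
  assumes M: "matroid E \<B>" and \<sigma>: "bij \<sigma>"
  shows "mrank \<B> (insert b (preceding \<sigma> b))
           = mrank \<B> (preceding \<sigma> b) + of_bool (b \<in> lex_first_basis \<B> \<sigma>)"
proof -
  have seg: "insert b (preceding \<sigma> b) = {e. inv \<sigma> e < Suc (inv \<sigma> b)}"
    using \<sigma> bij_imp_bij_inv bij_is_inj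
    by (fastforce simp: preceding_def less_Suc_eq dest: injD)
  have fin: "finite (lex_first_basis \<B> \<sigma>)"
    using lex_first_basis_least(1)[OF M \<sigma>] M matroid_finite_basis by blast
  have "mrank \<B> (insert b (preceding \<sigma> b))
          = card (lex_first_basis \<B> \<sigma> \<inter> insert b (preceding \<sigma> b))"
    unfolding seg by (rule mrank_segment[OF M \<sigma>])
  also have "\<dots> = card (lex_first_basis \<B> \<sigma> \<inter> preceding \<sigma> b) + of_bool (b \<in> lex_first_basis \<B> \<sigma>)"
    using fin by (simp add: Int_insert_right preceding_def)
  also have "card (lex_first_basis \<B> \<sigma> \<inter> preceding \<sigma> b) = mrank \<B> (preceding \<sigma> b)"
    unfolding preceding_def by (rule mrank_segment[OF M \<sigma>, symmetric])
  finally show ?thesis .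
qed

section \<open>Alternating sums over subsets and the beta invariant\<close>

lemma sum_Pow_insert_alternating:
  fixes f :: "'a set \<Rightarrow> 'b::ring_1"
  assumes "finite S" "b \<notin> S"
  shows "(\<Sum>A\<in>Pow (insert b S). (-1) ^ card A * f A)
           = (\<Sum>P\<in>Pow S. (-1) ^ card P * (f P - f (insert b P)))"
proof -
  have card_insert_b: "card (insert b P) = Suc (card P)" if "P \<subseteq> S" for P
    using that assms by (auto intro: card_insert_disjoint finite_subset)
  have "inj_on (insert b) (Pow S)" "Pow S \<inter> insert b ` Pow S = {}"
    using assms by (auto simp: inj_on_def)
  then have "(\<Sum>A\<in>Pow (insert b S). (-1) ^ card A * f A)
      = (\<Sum>P\<in>Pow S. (-1) ^ card P * f P) + (\<Sum>P\<in>Pow S. (-1) ^ card (insert b P) * f (insert b P))"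
    using assms by (simp add: Pow_insert sum.union_disjoint sum.reindex)
  also have "(\<Sum>P\<in>Pow S. (-1) ^ card (insert b P) * f (insert b P))
      = (\<Sum>P\<in>Pow S. - ((-1) ^ card P * f (insert b P)))"
    by (rule sum.cong) (simp_all add: card_insert_b)
  finally show ?thesis by (simp add: sum_negf sum_subtractf right_diff_distrib)
qed

lemma sum_Pow_alternating:
  assumes "finite S"
  shows "(\<Sum>A\<in>Pow S. (-1) ^ card A) = (of_bool (S = {}) :: 'b::ring_1)"
proof (cases "S = {}")
  case False
  then obtain b where b: "b \<in> S" by blast
  then have "S = insert b (S - {b})" by blast
  then show ?thesis
    using sum_Pow_insert_alternating[of "S - {b}" b "\<lambda>_. 1 :: 'b"] assms False by simp
qed simp

lemma sum_Pow_alternating_card: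
  assumes "finite S"
  shows "(\<Sum>A\<in>Pow S. (-1) ^ card A * of_nat (card A)) = - (of_bool (card S = 1) :: 'b::ring_1)"
proof (cases "S = {}")
  case False
  then obtain b where b: "b \<in> S" by blast
  have card_insert: "of_nat (card P) - of_nat (card (insert b P)) = (-1 :: 'b)"
    if "P \<in> Pow (S - {b})" for P
    using that assms by (subst card_insert_disjoint) (auto intro: finite_subset)
  have iff: "S - {b} = {} \<longleftrightarrow> card S = 1"
    using assms b by (auto simp: card_1_singleton_iff)
  have "S = insert b (S - {b})" using b by blast
  then have "(\<Sum>A\<in>Pow S. (-1) ^ card A * of_nat (card A))
      = (\<Sum>P\<in>Pow (S - {b}). (-1) ^ card P * (of_nat (card P) - of_nat (card (insert b P))) :: 'b)"
    using sum_Pow_insert_alternating[of "S - {b}" b "\<lambda>A. of_nat (card A)"] assms by simp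
  also have "\<dots> = (\<Sum>P\<in>Pow (S - {b}). - ((-1) ^ card P))"
    by (rule sum.cong) (simp_all only: card_insert mult_minus1_right)
  also have "\<dots> = - (\<Sum>P\<in>Pow (S - {b}). (-1) ^ card P)"
    by (rule sum_negf)
  also have "\<dots> = - (of_bool (card S = 1) :: 'b)"
    unfolding iff[symmetric] using assms by (simp add: sum_Pow_alternating)
  finally show ?thesis .
qed simp

lemma sum_Pow_alternating_compl:
  fixes f :: "'a set \<Rightarrow> 'b::ring_1"
  assumes "finite E"
  shows "(\<Sum>A\<in>Pow E. (-1) ^ card A * f (E - A)) = (-1) ^ card E * (\<Sum>A\<in>Pow E. (-1) ^ card A * f A)"
proof -
  have sign: "(-1) ^ card (E - A) = ((-1) ^ card E * (-1) ^ card A :: 'b)" if "A \<subseteq> E" for A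
  proof -
    have "card E = card (E - A) + card A"
      using that assms by (simp add: card_Diff_subset card_mono finite_subset)
    moreover have "(-1) ^ card A * (-1) ^ card A = (1 :: 'b)"
      by (simp flip: power_add)
    ultimately show ?thesis by (simp add: power_add mult.assoc)
  qed
  have "(\<Sum>A\<in>Pow E. (-1) ^ card A * f (E - A)) = (\<Sum>A\<in>Pow E. (-1) ^ card (E - A) * f A)"
    by (rule sum.reindex_bij_witness[of _ "\<lambda>A. E - A" "\<lambda>A. E - A"]) (auto simp: double_diff)
  also have "\<dots> = (\<Sum>A\<in>Pow E. (-1) ^ card E * ((-1) ^ card A * f A))"
    by (rule sum.cong) (simp_all add: sign mult.assoc)
  finally show ?thesis by (simp add: sum_distrib_left)
qed

lemma sum_Pow_remove_alternating_affine:
  fixes f :: "'a set \<Rightarrow> 'b::comm_ring_1"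
  assumes E: "finite E" "b \<in> E"
  shows "(\<Sum>P\<in>Pow (E - {b}). (-1) ^ card P * (u + v * (f (insert b P) - f P)))
       = u * of_bool (E = {b}) - v * (\<Sum>A\<in>Pow E. (-1) ^ card A * f A)"
proof -
  have "(\<Sum>A\<in>Pow E. (-1) ^ card A * f A) = (\<Sum>P\<in>Pow (E - {b}). (-1) ^ card P * (f P - f (insert b P)))"
    using sum_Pow_insert_alternating[of "E - {b}" b f] E by (simp add: insert_absorb)
  then have jumps: "(\<Sum>P\<in>Pow (E - {b}). (-1) ^ card P * (f (insert b P) - f P))
      = - (\<Sum>A\<in>Pow E. (-1) ^ card A * f A)"
    by (simp add: sum_negf[symmetric] algebra_simps)
  have "E - {b} = {} \<longleftrightarrow> E = {b}" using E by blast
  then have signs: "(\<Sum>P\<in>Pow (E - {b}). (-1) ^ card P) = (of_bool (E = {b}) :: 'b)"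
    using sum_Pow_alternating[of "E - {b}", where 'b = 'b] E by simp
  have "(\<Sum>P\<in>Pow (E - {b}). (-1) ^ card P * (u + v * (f (insert b P) - f P)))
      = (\<Sum>P\<in>Pow (E - {b}). u * (-1) ^ card P + v * ((-1) ^ card P * (f (insert b P) - f P)))"
    by (rule sum.cong) (simp_all add: algebra_simps)
  also have "\<dots> = u * (\<Sum>P\<in>Pow (E - {b}). (-1) ^ card P)
        + v * (\<Sum>P\<in>Pow (E - {b}). (-1) ^ card P * (f (insert b P) - f P))"
    by (simp add: sum.distrib sum_distrib_left)
  finally show ?thesis by (simp add: jumps signs)
qed

lemma coeff_linear_power_1: "coeff ([:c, 1:] ^ a) 1 = of_nat a * c ^ (a - 1)"
proof (induction a)
  case (Suc a)
  then show ?case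
    by (cases a) (simp_all add: coeff_pCons_Suc coeff_0_power algebra_simps)
qed simp

lemma coeff_tutte_term:
  "coeff (coeff ([:-1, 1:] ^ a * [:[:-1, 1:] ^ b:]) 1) 0 = (-1) ^ (a + b + 1) * int a"
proof -
  have "coeff ([:-1, 1:] ^ a * [:[:-1, 1:] ^ b:]) 1 = [:-1, 1:] ^ b * (of_nat a * (-1) ^ (a - 1) :: int poly)"
    using coeff_linear_power_1[of "-1 :: int poly" a] by (simp add: mult.commute)
  then have "coeff (coeff ([:-1, 1:] ^ a * [:[:-1, 1:] ^ b:]) 1) 0 = (-1) ^ b * int a * (-1) ^ (a - 1)"
    by (simp add: coeff_mult_0 coeff_0_power of_nat_poly)
  also have "\<dots> = (-1) ^ (a + b + 1) * int a"
    by (cases a) (simp_all add: power_add)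
  finally show ?thesis .
qed

lemma beta_eq_alternating_rank_sum:
  assumes E: "finite E" "E \<noteq> {}" and \<B>: "\<B> \<noteq> {}" "\<B> \<subseteq> Pow E"
  shows "beta E \<B> = (-1) ^ mrank \<B> E * (\<Sum>A\<in>Pow E. (-1) ^ card A * int (mrank \<B> A))"
proof -
  define r where "r = mrank \<B> E"
  have fin: "finite \<B>" using E \<B> finite_subset by blast
  have summand: "coeff (coeff ([:-1, 1:] ^ (r - mrank \<B> A) * [:[:-1, 1:] ^ (card A - mrank \<B> A):]) 1) 0
      = (-1) ^ (r + 1) * ((-1) ^ card A * (int r - int (mrank \<B> A)))" if "A \<subseteq> E" for A
  proof -
    have "finite A" using that E finite_subset by blast
    then have le: "mrank \<B> A \<le> r" "mrank \<B> A \<le> card A"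
      using mrank_mono[OF that E(1) \<B>(1) fin] mrank_le_card[OF _ \<B>(1) fin] r_def by auto
    then have sign: "(-1::int) ^ (r - mrank \<B> A + (card A - mrank \<B> A) + 1)
        = (-1) ^ (r + 1) * (-1) ^ card A"
      by (simp add: minus_one_power_iff)
    show ?thesis
      unfolding coeff_tutte_term sign using le by (simp add: of_nat_diff)
  qed
  have "beta E \<B> = (\<Sum>A\<in>Pow E. (-1) ^ (r + 1) * ((-1) ^ card A * (int r - int (mrank \<B> A))))"
    unfolding beta_def tutte_def r_def[symmetric] coeff_sum
    by (rule sum.cong) (simp_all only: summand Pow_iff)
  also have "\<dots> = (-1) ^ (r + 1) * (\<Sum>A\<in>Pow E. (-1) ^ card A * (int r - int (mrank \<B> A)))"
    by (simp add: sum_distrib_left)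
  also have "\<dots> = (-1) ^ r * (\<Sum>A\<in>Pow E. (-1) ^ card A * int (mrank \<B> A))"
    using sum_Pow_alternating[OF E(1), where 'b = int] E
    by (simp add: right_diff_distrib sum_subtractf flip: sum_distrib_left sum_distrib_right)
  finally show ?thesis unfolding r_def .
qed

lemma beta_dual_matroid:
  assumes M: "matroid E \<B>" and E: "E \<noteq> {}"
  shows "beta E (dual_matroid E \<B>) = beta E \<B> - (-1) ^ (card E - mrank \<B> E) * of_bool (card E = 1)"
proof -
  define r where "r = mrank \<B> E"
  define R where "R = (\<Sum>A\<in>Pow E. (-1) ^ card A * int (mrank \<B> A))"
  have fin: "finite E" "finite \<B>" "\<B> \<noteq> {}" "\<B> \<subseteq> Pow E"
    using M matroid_finite_bases unfolding matroid_def by auto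
  have dual: "dual_matroid E \<B> \<noteq> {}" "dual_matroid E \<B> \<subseteq> Pow E"
    using fin by (auto simp: dual_matroid_def)
  have rank_dual: "int (mrank (dual_matroid E \<B>) A) = int (card A) - int r + int (mrank \<B> (E - A))"
    if "A \<subseteq> E" for A
    using mrank_dual_matroid[OF M that] r_def by linarith
  have r_le: "r \<le> card E"
    using mrank_le_card fin r_def by blast
  have rank_dual_E: "mrank (dual_matroid E \<B>) E = card E - r"
    using rank_dual[of E] mrank_empty[OF fin(3)] r_le by simp
  have "(\<Sum>A\<in>Pow E. (-1) ^ card A * int (mrank (dual_matroid E \<B>) A))
      = (\<Sum>A\<in>Pow E. (-1) ^ card A * int (card A) - int r * (-1) ^ card A
          + (-1) ^ card A * int (mrank \<B> (E - A)))"
    by (rule sum.cong) (simp_all add: rank_dual algebra_simps)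
  also have "\<dots> = (\<Sum>A\<in>Pow E. (-1) ^ card A * int (card A)) - int r * (\<Sum>A\<in>Pow E. (-1) ^ card A)
        + (\<Sum>A\<in>Pow E. (-1) ^ card A * int (mrank \<B> (E - A)))"
    by (simp add: sum.distrib sum_subtractf sum_distrib_left)
  also have "\<dots> = - of_bool (card E = 1) + (-1) ^ card E * R"
    using sum_Pow_alternating_card[OF fin(1), where 'b = int] sum_Pow_alternating[OF fin(1), where 'b = int]
      sum_Pow_alternating_compl[OF fin(1), of "\<lambda>A. int (mrank \<B> A)"] E by (simp add: R_def)
  finally have "beta E (dual_matroid E \<B>)
      = (-1) ^ (card E - r) * (- of_bool (card E = 1) + (-1) ^ card E * R)"
    using beta_eq_alternating_rank_sum[OF fin(1) E dual] by (simp add: rank_dual_E)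
  moreover have "(-1) ^ (card E - r) * (-1) ^ card E = ((-1) ^ r :: int)"
    using r_le by (simp add: minus_one_power_iff)
  moreover have "beta E \<B> = (-1) ^ r * R"
    unfolding R_def r_def using beta_eq_alternating_rank_sum[OF fin(1) E fin(3,4)] .
  ultimately show ?thesis
    by (simp add: r_def algebra_simps)
qed

section \<open>Lagrange interpolation and sums over orderings\<close>

lemma coeff_prod_monic_linear:
  fixes t :: "'a \<Rightarrow> 'b::idom"
  assumes "finite S"
  shows "coeff (\<Prod>j\<in>S. [:- t j, 1:]) (card S) = 1"
proof -
  have "degree (\<Prod>j\<in>S. [:- t j, 1:]) = card S"
    using assms by (simp add: degree_prod_eq_sum_degree)
  then show ?thesis
    using lead_coeff_prod[of "\<lambda>j. [:- t j, 1:]" S] by simp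
qed

lemma lagrange_interpolation:
  fixes t :: "'a \<Rightarrow> 'b::field" and g :: "'b poly"
  assumes T: "finite T" "inj_on t T" and deg: "degree g < card T"
  shows "g = (\<Sum>c\<in>T. smult (poly g (t c) / (\<Prod>j\<in>T - {c}. t c - t j)) (\<Prod>j\<in>T - {c}. [:- t j, 1:]))"
    (is "g = ?P")
proof (rule poly_eqI_degree[of "t ` T"])
  fix x assume "x \<in> t ` T"
  then obtain d where d: "d \<in> T" "x = t d" by blast
  have vanish: "(\<Prod>j\<in>T - {c}. t d - t j) = 0" if "c \<in> T - {d}" for c
    using that d T by (auto simp: prod_zero_iff)
  have "(\<Prod>j\<in>T - {d}. t d - t j) \<noteq> 0"
    using T d by (auto simp: prod_zero_iff inj_on_def)
  then show "poly g x = poly ?P x"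
    using d T by (simp add: poly_sum poly_prod sum.remove vanish)
next
  have "degree (smult a (\<Prod>j\<in>T - {c}. [:- t j, 1:])) \<le> card T - 1" if "c \<in> T" for a c
  proof -
    have "degree (\<Prod>j\<in>T - {c}. [:- t j, 1:]) = card T - 1"
      using T that by (simp add: degree_prod_eq_sum_degree card_Diff_singleton)
    then show ?thesis using degree_smult_le[of a "\<Prod>j\<in>T - {c}. [:- t j, 1:]"] by simp
  qed
  then have "degree ?P \<le> card T - 1"
    by (intro degree_sum_le[OF T(1)])
  then show "degree ?P < card (t ` T)"
    using deg T by (simp add: card_image)
qed (use deg T in \<open>simp add: card_image\<close>)

lemma sum_inverse_prod_diff_eq_0:
  fixes t :: "'a \<Rightarrow> 'b::field"
  assumes T: "finite T" "inj_on t T" and card: "2 \<le> card T"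
  shows "(\<Sum>c\<in>T. 1 / (\<Prod>j\<in>T - {c}. t c - t j)) = 0"
proof -
  have "coeff (\<Prod>j\<in>T - {c}. [:- t j, 1:]) (card T - 1) = 1" if "c \<in> T" for c
    using coeff_prod_monic_linear[of "T - {c}" t] that T by simp
  moreover have "coeff (1 :: 'b poly) (card T - 1) = 0"
    using card by simp
  ultimately show ?thesis
    using arg_cong[OF lagrange_interpolation[OF T, of 1], of "\<lambda>p. coeff p (card T - 1)"] card
    by (simp add: coeff_sum)
qed

lemma sum_prod_div_prod_diff:
  fixes t :: "'a \<Rightarrow> 'b::field"
  assumes T: "finite T" "inj_on t T" "T \<noteq> {}"
  shows "(\<Sum>c\<in>T. (\<Prod>j\<in>T - {c}. t j) / (\<Prod>j\<in>T - {c}. t c - t j)) = (-1) ^ (card T - 1)"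
proof -
  have "(\<Prod>j\<in>T - {c}. - t j) = (-1) ^ (card T - 1) * (\<Prod>j\<in>T - {c}. t j)" if "c \<in> T" for c
    using that T by (simp add: prod_uminus card_Diff_singleton)
  then have interpolated: "1 = (-1) ^ (card T - 1) * (\<Sum>c\<in>T. (\<Prod>j\<in>T - {c}. t j) / (\<Prod>j\<in>T - {c}. t c - t j))"
    using arg_cong[OF lagrange_interpolation[OF T(1,2), of 1], of "\<lambda>p. poly p 0"] T
    by (simp add: poly_sum poly_prod sum_distrib_left card_gt_0_iff)
  have square: "(-1) ^ (card T - 1) * (-1) ^ (card T - 1) = (1 :: 'b)"
    by (simp flip: power_add)
  show ?thesis
    using arg_cong[OF interpolated, of "\<lambda>x. (-1) ^ (card T - 1) * x"]
    by (simp add: square flip: mult.assoc)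
qed

text \<open>The denominator of the localization formula at the fixed point whose order is listed by \<open>L\<close>.\<close>
fun tangent_euler :: "('a \<Rightarrow> 'b::comm_ring_1) \<Rightarrow> 'a list \<Rightarrow> 'b" where
  "tangent_euler t (a # b # L) = (t a - t b) * tangent_euler t (b # L)"
| "tangent_euler t _ = 1"

lemma tangent_euler_append:
  "tangent_euler t (xs @ [b]) * tangent_euler t (b # ys) = tangent_euler t (xs @ b # ys)"
proof (induction xs)
  case (Cons a xs)
  then show ?case by (cases xs) (simp_all add: mult.assoc)
qed simp

lemma tangent_euler_snoc:
  "tangent_euler t (xs @ [b, c]) = tangent_euler t (xs @ [b]) * (t b - t c)"
  using tangent_euler_append[of t xs b "[c]"] by simp

lemma tangent_euler_rev: "tangent_euler t (rev L) = tangent_euler (\<lambda>x. - t x) L"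
proof (induction t L rule: tangent_euler.induct)
  case (1 t a b L)
  then show ?case by (simp add: tangent_euler_snoc)
qed simp_all

lemma tangent_euler_map_upt:
  "tangent_euler t (map f [0..<Suc n]) = (\<Prod>i<n. t (f i) - t (f (Suc i)))"
proof (induction n)
  case (Suc n)
  have "map f [0..<Suc (Suc n)] = map f [0..<n] @ [f n, f (Suc n)]" by simp
  then show ?case using Suc by (simp add: tangent_euler_snoc)
qed simp

lemma sum_permutations_of_set_Cons:
  assumes "finite S" "S \<noteq> {}"
  shows "(\<Sum>L\<in>permutations_of_set S. f L) = (\<Sum>b\<in>S. \<Sum>L\<in>permutations_of_set (S - {b}). f (b # L))"
  unfolding permutations_of_set_nonempty[OF assms(2)]
  using assms by (subst sum.UNION_disjoint) (auto simp: sum.reindex)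

lemma sum_inverse_prod_diff_insert:
  fixes t :: "'a \<Rightarrow> 'b::field"
  assumes S: "finite S" "S \<noteq> {}" and a: "a \<notin> S" and inj: "inj_on t (insert a S)"
  shows "(\<Sum>b\<in>S. 1 / ((t a - t b) * (\<Prod>j\<in>S - {b}. t b - t j))) = 1 / (\<Prod>j\<in>S. t a - t j)"
proof -
  have other: "1 / (\<Prod>j\<in>insert a S - {b}. t b - t j) = - (1 / ((t a - t b) * (\<Prod>j\<in>S - {b}. t b - t j)))"
    if "b \<in> S" for b
  proof -
    have "insert a S - {b} = insert a (S - {b})" using that a by auto
    then have "(\<Prod>j\<in>insert a S - {b}. t b - t j) = - ((t a - t b) * (\<Prod>j\<in>S - {b}. t b - t j))"
      using S a by (simp add: algebra_simps)
    then show ?thesis by (simp only: divide_minus_right)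
  qed
  have "0 = (\<Sum>c\<in>insert a S. 1 / (\<Prod>j\<in>insert a S - {c}. t c - t j))"
    using S a inj by (intro sum_inverse_prod_diff_eq_0[symmetric]) (auto simp: Suc_le_eq card_gt_0_iff)
  also have "\<dots> = 1 / (\<Prod>j\<in>S. t a - t j) + (\<Sum>b\<in>S. 1 / (\<Prod>j\<in>insert a S - {b}. t b - t j))"
    using S a by (simp add: insert_Diff_if)
  also have "(\<Sum>b\<in>S. 1 / (\<Prod>j\<in>insert a S - {b}. t b - t j))
      = - (\<Sum>b\<in>S. 1 / ((t a - t b) * (\<Prod>j\<in>S - {b}. t b - t j)))"
    by (simp add: other sum_negf cong: sum.cong)
  finally show ?thesis by (simp add: eq_neg_iff_add_eq_0)
qed

lemma sum_inverse_tangent_euler_Cons: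
  fixes t :: "'a \<Rightarrow> 'b::field"
  assumes "finite S" "a \<notin> S" "inj_on t (insert a S)"
  shows "(\<Sum>L\<in>permutations_of_set S. 1 / tangent_euler t (a # L)) = 1 / (\<Prod>j\<in>S. t a - t j)"
  using assms
proof (induction "card S" arbitrary: S a rule: less_induct)
  case less
  show ?case
  proof (cases "S = {}")
    case False
    have IH: "(\<Sum>L\<in>permutations_of_set (S - {b}). 1 / tangent_euler t (b # L))
        = 1 / (\<Prod>j\<in>S - {b}. t b - t j)" if "b \<in> S" for b
      using that less.prems card_Diff1_less[of S b] by (intro less.hyps) (auto simp: inj_on_def)
    have "(\<Sum>L\<in>permutations_of_set S. 1 / tangent_euler t (a # L))
        = (\<Sum>b\<in>S. 1 / (t a - t b) * (\<Sum>L\<in>permutations_of_set (S - {b}). 1 / tangent_euler t (b # L)))"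
      using less.prems False by (simp add: sum_permutations_of_set_Cons sum_distrib_left)
    also have "\<dots> = (\<Sum>b\<in>S. 1 / ((t a - t b) * (\<Prod>j\<in>S - {b}. t b - t j)))"
      by (rule sum.cong) (simp_all add: IH)
    also have "\<dots> = 1 / (\<Prod>j\<in>S. t a - t j)"
      using less.prems False by (intro sum_inverse_prod_diff_insert)
    finally show ?thesis .
  qed simp
qed

lemma sum_inverse_tangent_euler_snoc:
  fixes t :: "'a \<Rightarrow> 'b::field"
  assumes "finite S" "b \<notin> S" "inj_on t (insert b S)"
  shows "(\<Sum>L\<in>permutations_of_set S. 1 / tangent_euler t (L @ [b])) = 1 / (\<Prod>j\<in>S. t j - t b)"
proof -
  have "(\<Sum>L\<in>permutations_of_set S. 1 / tangent_euler t (L @ [b]))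
      = (\<Sum>L\<in>permutations_of_set S. 1 / tangent_euler (\<lambda>x. - t x) (b # rev L))"
    by (simp flip: tangent_euler_rev)
  also have "\<dots> = (\<Sum>L\<in>permutations_of_set S. 1 / tangent_euler (\<lambda>x. - t x) (b # L))"
    by (rule sum.reindex_bij_witness[of _ rev rev]) (auto simp: permutations_of_set_def)
  also have "\<dots> = 1 / (\<Prod>j\<in>S. - t b - - t j)"
    using assms by (simp add: sum_inverse_tangent_euler_Cons inj_on_def)
  finally show ?thesis by simp
qed

lemma takeWhile_dropWhile_neq_split:
  "b \<notin> set L1 \<Longrightarrow> takeWhile (\<lambda>x. x \<noteq> b) (L1 @ b # L2) = L1 \<and> dropWhile (\<lambda>x. x \<noteq> b) (L1 @ b # L2) = b # L2"
  by (induction L1) auto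

lemma sum_permutations_of_set_split:
  assumes E: "finite E" "b \<in> E"
  shows "(\<Sum>L\<in>permutations_of_set E. f L)
       = (\<Sum>P\<in>Pow (E - {b}). \<Sum>L1\<in>permutations_of_set P. \<Sum>L2\<in>permutations_of_set (E - {b} - P).
            f (L1 @ b # L2))"
proof -
  define Sg where "Sg = Sigma (Pow (E - {b})) (\<lambda>P. permutations_of_set P \<times> permutations_of_set (E - {b} - P))"
  define pre post where "pre L = takeWhile (\<lambda>x. x \<noteq> b) L" and "post L = tl (dropWhile (\<lambda>x. x \<noteq> b) L)"
    for L :: "'a list"
  have "(\<Sum>L\<in>permutations_of_set E. f L) = (\<Sum>(P, L1, L2)\<in>Sg. f (L1 @ b # L2))"
  proof (rule sum.reindex_bij_witness[where j = "\<lambda>L. (set (pre L), pre L, post L)"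
        and i = "\<lambda>(P, L1, L2). L1 @ b # L2"])
    fix L assume L: "L \<in> permutations_of_set E"
    then obtain L1 L2 where split: "L = L1 @ b # L2" "b \<notin> set L1"
      using E split_list_first[of b L] by (auto simp: permutations_of_set_def)
    then have "pre L = L1" "post L = L2"
      using takeWhile_dropWhile_neq_split[of b L1 L2] by (simp_all add: pre_def post_def)
    then show "(case (set (pre L), pre L, post L) of (P, L1, L2) \<Rightarrow> L1 @ b # L2) = L"
      "(set (pre L), pre L, post L) \<in> Sg"
      "(case (set (pre L), pre L, post L) of (P, L1, L2) \<Rightarrow> f (L1 @ b # L2)) = f L"
      using L split by (auto simp: Sg_def permutations_of_set_def)
  next
    fix x assume "x \<in> Sg"
    then obtain P L1 L2 where x: "x = (P, L1, L2)" "P \<subseteq> E - {b}" "set L1 = P" "distinct L1"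
      "set L2 = E - {b} - P" "distinct L2"
      by (auto simp: Sg_def permutations_of_set_def)
    then have "pre (L1 @ b # L2) = L1" "post (L1 @ b # L2) = L2"
      using takeWhile_dropWhile_neq_split[of b L1 L2] by (auto simp: pre_def post_def)
    then show "(set (pre (case x of (P, L1, L2) \<Rightarrow> L1 @ b # L2)), pre (case x of (P, L1, L2) \<Rightarrow> L1 @ b # L2),
        post (case x of (P, L1, L2) \<Rightarrow> L1 @ b # L2)) = x"
      "(case x of (P, L1, L2) \<Rightarrow> L1 @ b # L2) \<in> permutations_of_set E"
      using x E by (auto simp: permutations_of_set_def)
  qed
  also have "\<dots> = (\<Sum>P\<in>Pow (E - {b}). \<Sum>L1\<in>permutations_of_set P. \<Sum>L2\<in>permutations_of_set (E - {b} - P).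
      f (L1 @ b # L2))"
    unfolding Sg_def using E by (simp add: sum.Sigma sum.cartesian_product split_def)
  finally show ?thesis .
qed

lemma sum_inverse_tangent_euler_around:
  fixes t :: "'a \<Rightarrow> 'b::field"
  assumes E: "finite E" "b \<in> E" and inj: "inj_on t E" and P: "P \<subseteq> E - {b}"
  shows "(\<Sum>L1\<in>permutations_of_set P. \<Sum>L2\<in>permutations_of_set (E - {b} - P).
            1 / tangent_euler t (L1 @ b # L2))
       = (-1) ^ card P / (\<Prod>j\<in>E - {b}. t b - t j)"
proof -
  have fin: "finite P" "finite (E - {b} - P)" using P E finite_subset by auto
  have "(\<Sum>L1\<in>permutations_of_set P. \<Sum>L2\<in>permutations_of_set (E - {b} - P).
          1 / tangent_euler t (L1 @ b # L2))
      = (\<Sum>L1\<in>permutations_of_set P. \<Sum>L2\<in>permutations_of_set (E - {b} - P).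
          1 / tangent_euler t (L1 @ [b]) * (1 / tangent_euler t (b # L2)))"
    by (intro sum.cong refl) (subst tangent_euler_append[symmetric], simp)
  also have "\<dots> = (\<Sum>L1\<in>permutations_of_set P. 1 / tangent_euler t (L1 @ [b]))
          * (\<Sum>L2\<in>permutations_of_set (E - {b} - P). 1 / tangent_euler t (b # L2))"
    by (rule sum_product[symmetric])
  also have "(\<Sum>L1\<in>permutations_of_set P. 1 / tangent_euler t (L1 @ [b])) = 1 / (\<Prod>j\<in>P. t j - t b)"
    by (rule sum_inverse_tangent_euler_snoc) (use P E fin inj_on_subset[OF inj, of "insert b P"] in auto)
  also have "(\<Sum>L2\<in>permutations_of_set (E - {b} - P). 1 / tangent_euler t (b # L2))
      = 1 / (\<Prod>j\<in>E - {b} - P. t b - t j)"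
    by (rule sum_inverse_tangent_euler_Cons)
      (use P E fin inj_on_subset[OF inj, of "insert b (E - {b} - P)"] in auto)
  also have "(\<Prod>j\<in>P. t j - t b) = (\<Prod>j\<in>P. - (t b - t j))"
    by simp
  also have "\<dots> = (-1) ^ card P * (\<Prod>j\<in>P. t b - t j)"
    by (rule prod_uminus)
  also have "1 / ((-1) ^ card P * (\<Prod>j\<in>P. t b - t j)) * (1 / (\<Prod>j\<in>E - {b} - P. t b - t j))
      = (-1) ^ card P / ((\<Prod>j\<in>P. t b - t j) * (\<Prod>j\<in>E - {b} - P. t b - t j))"
    by (cases "even (card P)") simp_all
  also have "(\<Prod>j\<in>P. t b - t j) * (\<Prod>j\<in>E - {b} - P. t b - t j) = (\<Prod>j\<in>E - {b}. t b - t j)"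
    using P E by (simp add: prod.subset_diff)
  finally show ?thesis .
qed

lemma sum_permutations_prefix:
  fixes t :: "'a \<Rightarrow> 'b::field" and h :: "'a set \<Rightarrow> 'b"
  assumes E: "finite E" "b \<in> E" and inj: "inj_on t E"
  shows "(\<Sum>L\<in>permutations_of_set E. h (set (takeWhile (\<lambda>x. x \<noteq> b) L)) / tangent_euler t L)
       = (\<Sum>P\<in>Pow (E - {b}). (-1) ^ card P * h P) / (\<Prod>j\<in>E - {b}. t b - t j)"
proof -
  have "(\<Sum>L1\<in>permutations_of_set P. \<Sum>L2\<in>permutations_of_set (E - {b} - P).
          h (set (takeWhile (\<lambda>x. x \<noteq> b) (L1 @ b # L2))) / tangent_euler t (L1 @ b # L2))
      = (-1) ^ card P * h P / (\<Prod>j\<in>E - {b}. t b - t j)" if P: "P \<subseteq> E - {b}" for P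
  proof -
    have "(\<Sum>L1\<in>permutations_of_set P. \<Sum>L2\<in>permutations_of_set (E - {b} - P).
          h (set (takeWhile (\<lambda>x. x \<noteq> b) (L1 @ b # L2))) / tangent_euler t (L1 @ b # L2))
        = (\<Sum>L1\<in>permutations_of_set P. \<Sum>L2\<in>permutations_of_set (E - {b} - P).
          h P * (1 / tangent_euler t (L1 @ b # L2)))"
      using P by (intro sum.cong refl) (auto simp: permutations_of_set_def takeWhile_dropWhile_neq_split)
    also have "\<dots> = h P * (\<Sum>L1\<in>permutations_of_set P. \<Sum>L2\<in>permutations_of_set (E - {b} - P).
          1 / tangent_euler t (L1 @ b # L2))"
      by (simp add: sum_distrib_left)
    finally show ?thesis
      by (simp add: sum_inverse_tangent_euler_around[OF E inj P])
  qed
  then have "(\<Sum>L\<in>permutations_of_set E. h (set (takeWhile (\<lambda>x. x \<noteq> b) L)) / tangent_euler t L)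
      = (\<Sum>P\<in>Pow (E - {b}). (-1) ^ card P * h P / (\<Prod>j\<in>E - {b}. t b - t j))"
    unfolding sum_permutations_of_set_split[OF E] by (intro sum.cong) simp_all
  then show ?thesis by (simp add: sum_divide_distrib)
qed

section \<open>Localization on the permutohedral variety\<close>

lemma bij_betw_map_permutes:
  "bij_betw (\<lambda>\<sigma>. map \<sigma> [0..<n]) {\<sigma>. \<sigma> permutes {..<n}} (permutations_of_set {..<n})"
proof (rule bij_betw_byWitness[where f' = "\<lambda>L k. if k < n then L ! k else k"])
  show "\<forall>\<sigma>\<in>{\<sigma>. \<sigma> permutes {..<n}}. (\<lambda>k. if k < n then map \<sigma> [0..<n] ! k else k) = \<sigma>"
  proof (intro ballI ext)
    fix \<sigma> k assume "\<sigma> \<in> {\<sigma>. \<sigma> permutes {..<n}}"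
    then show "(if k < n then map \<sigma> [0..<n] ! k else k) = \<sigma> k"
      by (simp add: permutes_not_in)
  qed
  show "\<forall>L\<in>permutations_of_set {..<n}. map (\<lambda>k. if k < n then L ! k else k) [0..<n] = L"
  proof
    fix L assume "L \<in> permutations_of_set {..<n}"
    then have "length L = n" by (simp add: length_finite_permutations_of_set)
    then show "map (\<lambda>k. if k < n then L ! k else k) [0..<n] = L"
      by (intro nth_equalityI) auto
  qed
  show "(\<lambda>\<sigma>. map \<sigma> [0..<n]) ` {\<sigma>. \<sigma> permutes {..<n}} \<subseteq> permutations_of_set {..<n}"
  proof clarify
    fix \<sigma> assume \<sigma>: "\<sigma> permutes {..<n}"
    then have "distinct (map \<sigma> [0..<n])" "set (map \<sigma> [0..<n]) = {..<n}"
      by (simp_all add: distinct_map permutes_inj_on atLeast0LessThan permutes_image)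
    then show "map \<sigma> [0..<n] \<in> permutations_of_set {..<n}"
      by (simp add: permutations_of_set_def)
  qed
  show "(\<lambda>L k. if k < n then L ! k else k) ` permutations_of_set {..<n} \<subseteq> {\<sigma>. \<sigma> permutes {..<n}}"
  proof clarify
    fix L assume L: "L \<in> permutations_of_set {..<n}"
    then have L': "length L = n" "distinct L" "set L = {..<n}"
      by (simp_all add: length_finite_permutations_of_set permutations_of_set_def)
    have "inj_on (\<lambda>k. if k < n then L ! k else k) {..<n}"
      using L' by (simp add: inj_on_def nth_eq_iff_index_eq)
    moreover have "(\<lambda>k. if k < n then L ! k else k) ` {..<n} = {..<n}"
      using L' by (simp add: set_conv_nth image_def lessThan_def) blast
    ultimately show "(\<lambda>k. if k < n then L ! k else k) permutes {..<n}"
      by (intro bij_imp_permutes) (simp_all add: bij_betw_def)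
  qed
qed

lemma set_takeWhile_map_permutes:
  assumes \<sigma>: "\<sigma> permutes {..<n}" and b: "b < n"
  shows "set (takeWhile (\<lambda>x. x \<noteq> b) (map \<sigma> [0..<n])) = preceding \<sigma> b"
proof -
  define k where "k = inv \<sigma> b"
  have k: "k < n" "\<sigma> k = b"
    using permutes_in_image[OF permutes_inv[OF \<sigma>], of b] b permutes_inverses(1)[OF \<sigma>]
    by (simp_all add: k_def)
  then have "map \<sigma> [0..<n] = map \<sigma> [0..<k] @ b # map \<sigma> [Suc k..<n]"
    using upt_add_eq_append[of 0 k "n - k"] upt_conv_Cons[of k n] by simp
  moreover have "b \<notin> set (map \<sigma> [0..<k])"
  proof
    assume "b \<in> set (map \<sigma> [0..<k])"
    then obtain i where "i < k" "\<sigma> i = \<sigma> k" using k by auto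
    then show False using permutes_inj[OF \<sigma>] by (metis injD less_irrefl)
  qed
  ultimately have "takeWhile (\<lambda>x. x \<noteq> b) (map \<sigma> [0..<n]) = map \<sigma> [0..<k]"
    using takeWhile_dropWhile_neq_split[of b "map \<sigma> [0..<k]"] by metis
  moreover have "\<sigma> ` {..<k} = {e. inv \<sigma> e < k}"
  proof (intro set_eqI iffI)
    fix e assume "e \<in> \<sigma> ` {..<k}"
    then show "e \<in> {e. inv \<sigma> e < k}" using permutes_inverses(2)[OF \<sigma>] by auto
  next
    fix e assume "e \<in> {e. inv \<sigma> e < k}"
    then show "e \<in> \<sigma> ` {..<k}"
      using permutes_inverses(1)[OF \<sigma>, of e] by (metis lessThan_iff mem_Collect_eq rev_image_eqI)
  qed
  ultimately show ?thesis by (simp add: preceding_def k_def atLeast0LessThan)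
qed

lemma sum_permutes_preceding:
  fixes t :: "nat \<Rightarrow> 'b::field"
  assumes inj: "inj_on t {0..n}" and b: "b \<in> {0..n}"
  shows "(\<Sum>\<sigma> | \<sigma> permutes {0..n}. h (preceding \<sigma> b) / (\<Prod>i<n. t (\<sigma> i) - t (\<sigma> (Suc i))))
       = (\<Sum>P\<in>Pow ({0..n} - {b}). (-1) ^ card P * h P) / (\<Prod>j\<in>{0..n} - {b}. t b - t j)"
proof -
  have E: "{0..n} = {..<Suc n}" by auto
  have "(\<Sum>\<sigma> | \<sigma> permutes {0..n}. h (preceding \<sigma> b) / (\<Prod>i<n. t (\<sigma> i) - t (\<sigma> (Suc i))))
      = (\<Sum>\<sigma> | \<sigma> permutes {..<Suc n}. h (set (takeWhile (\<lambda>x. x \<noteq> b) (map \<sigma> [0..<Suc n])))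
            / tangent_euler t (map \<sigma> [0..<Suc n]))"
    unfolding E using b
    by (intro sum.cong) (auto simp: set_takeWhile_map_permutes tangent_euler_map_upt simp del: upt_Suc)
  also have "\<dots> = (\<Sum>L\<in>permutations_of_set {..<Suc n}. h (set (takeWhile (\<lambda>x. x \<noteq> b) L)) / tangent_euler t L)"
    by (rule sum.reindex_bij_betw[OF bij_betw_map_permutes])
  also have "\<dots> = (\<Sum>P\<in>Pow ({0..n} - {b}). (-1) ^ card P * h P) / (\<Prod>j\<in>{0..n} - {b}. t b - t j)"
    unfolding E[symmetric] using b inj by (intro sum_permutations_prefix) auto
  finally show ?thesis .
qed

lemma loc_integral_preceding:
  fixes t :: "nat \<Rightarrow> real"
  assumes inj: "inj_on t {0..n}"
    and f: "\<And>\<sigma>. \<sigma> permutes {0..n} \<Longrightarrow> f \<sigma> t = (\<Sum>b\<in>{0..n}. w b * h b (preceding \<sigma> b))"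
  shows "loc_integral n f t = (\<Sum>b\<in>{0..n}.
           w b * (\<Sum>P\<in>Pow ({0..n} - {b}). (-1) ^ card P * h b P) / (\<Prod>j\<in>{0..n} - {b}. t b - t j))"
proof -
  have "loc_integral n f t = (\<Sum>\<sigma> | \<sigma> permutes {0..n}. \<Sum>b\<in>{0..n}.
      w b * (h b (preceding \<sigma> b) / (\<Prod>i<n. t (\<sigma> i) - t (\<sigma> (Suc i)))))"
    unfolding loc_integral_def by (intro sum.cong refl) (simp add: f sum_divide_distrib)
  also have "\<dots> = (\<Sum>b\<in>{0..n}. w b *
      (\<Sum>\<sigma> | \<sigma> permutes {0..n}. h b (preceding \<sigma> b) / (\<Prod>i<n. t (\<sigma> i) - t (\<sigma> (Suc i)))))"
    by (subst sum.swap) (simp add: sum_distrib_left)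
  also have "\<dots> = (\<Sum>b\<in>{0..n}.
      w b * (\<Sum>P\<in>Pow ({0..n} - {b}). (-1) ^ card P * h b P) / (\<Prod>j\<in>{0..n} - {b}. t b - t j))"
    using inj by (intro sum.cong) (simp_all add: sum_permutes_preceding)
  finally show ?thesis .
qed

section \<open>Chern classes at the fixed points\<close>

lemma coeff_linear_mult_Suc:
  fixes c :: "'a::comm_semiring_1"
  shows "coeff ([:1, c:] * p) (Suc m) = coeff p (Suc m) + c * coeff p m"
  by (simp add: mult_pCons_left coeff_pCons_Suc)

lemma degree_prod_linear_le:
  fixes w :: "'a \<Rightarrow> 'b::comm_semiring_1"
  assumes "finite A"
  shows "degree (\<Prod>i\<in>A. [:1, w i:]) \<le> card A"
proof -
  have "degree (\<Prod>i\<in>A. [:1, w i:]) \<le> sum (degree \<circ> (\<lambda>i. [:1, w i:])) A"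
    by (rule degree_prod_sum_le[OF assms])
  also have "\<dots> \<le> sum (\<lambda>i. 1) A"
    by (rule sum_mono) simp
  finally show ?thesis by simp
qed

lemma coeff_prod_linear_top:
  fixes w :: "'a \<Rightarrow> 'b::comm_ring_1"
  assumes "finite A"
  shows "coeff (\<Prod>i\<in>A. [:1, w i:]) (card A) = (\<Prod>i\<in>A. w i)"
  using assms
proof (induction A rule: finite_induct)
  case (insert x A)
  have "coeff (\<Prod>i\<in>A. [:1, w i:]) (Suc (card A)) = 0"
    using degree_prod_linear_le[OF insert(1), of w] by (intro coeff_eq_0) simp
  then show ?case using insert by (simp add: coeff_linear_mult_Suc)
qed simp

lemma coeff_prod_linear_subtop:
  fixes w :: "'a \<Rightarrow> 'b::comm_ring_1"
  assumes "finite A" "A \<noteq> {}"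
  shows "coeff (\<Prod>i\<in>A. [:1, w i:]) (card A - 1) = (\<Sum>b\<in>A. \<Prod>i\<in>A - {b}. w i)"
  using assms
proof (induction A rule: finite_induct)
  case (insert x A)
  show ?case
  proof (cases "A = {}")
    case False
    then obtain m where m: "card A = Suc m"
      using insert(1) by (metis card_0_eq not0_implies_Suc)
    have "insert x A - {b} = insert x (A - {b})" if "b \<in> A" for b
      using that insert(2) by auto
    then have "(\<Sum>b\<in>A. \<Prod>i\<in>insert x A - {b}. w i) = w x * (\<Sum>b\<in>A. \<Prod>i\<in>A - {b}. w i)"
      using insert(1,2) by (simp add: sum_distrib_left cong: sum.cong)
    then show ?thesis
      using insert m False coeff_prod_linear_top[OF insert(1), of w]
      by (simp add: coeff_linear_mult_Suc)
  qed simp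
qed simp

lemma char_weight_char_inv:
  assumes "i \<in> {0..n}"
  shows "char_weight n (char_inv i) t = - t i"
proof -
  have "real_of_int (char_inv i j) * t j = (if i = j then - t i else 0)" for j
    by (simp add: char_inv_def)
  then show ?thesis using assms by (simp add: char_weight_def)
qed

lemma char_weight_dual_char_inv:
  assumes "i \<in> {0..n}"
  shows "char_weight n (\<lambda>j. - char_inv i j) t = t i"
proof -
  have "real_of_int (- char_inv i j) * t j = (if i = j then t i else 0)" for j
    by (simp add: char_inv_def)
  then show ?thesis using assms by (simp add: char_weight_def)
qed

lemma chern_Kdual_class_S:
  assumes "lex_first_basis \<B> \<sigma> \<subseteq> {0..n}"
  shows "chern n k (Kdual (class_S n \<B>)) \<sigma> t
           = (if k < 0 then 0 else coeff (\<Prod>i\<in>lex_first_basis \<B> \<sigma>. [:1, t i:]) (nat k))"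
proof -
  have "(\<Prod>a\<in>#Kdual (class_S n \<B>) \<sigma>. [:1, char_weight n a t:])
      = (\<Prod>i\<in>lex_first_basis \<B> \<sigma>. [:1, char_weight n (\<lambda>j. - char_inv i j) t:])"
    by (simp add: Kdual_def class_S_def multiset.map_comp o_def prod_unfold_prod_mset)
  also have "\<dots> = (\<Prod>i\<in>lex_first_basis \<B> \<sigma>. [:1, t i:])"
    using assms by (intro prod.cong) (auto simp: char_weight_dual_char_inv)
  finally show ?thesis unfolding chern_def by simp
qed

lemma chern_class_Q:
  "chern n k (class_Q n \<B>) \<sigma> t
     = (if k < 0 then 0 else coeff (\<Prod>i\<in>{0..n} - lex_first_basis \<B> \<sigma>. [:1, - t i:]) (nat k))"
proof -
  have "(\<Prod>a\<in>#class_Q n \<B> \<sigma>. [:1, char_weight n a t:])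
      = (\<Prod>i\<in>{0..n} - lex_first_basis \<B> \<sigma>. [:1, char_weight n (char_inv i) t:])"
    by (simp add: class_Q_def multiset.map_comp o_def prod_unfold_prod_mset)
  also have "\<dots> = (\<Prod>i\<in>{0..n} - lex_first_basis \<B> \<sigma>. [:1, - t i:])"
    by (intro prod.cong) (auto simp: char_weight_char_inv)
  finally show ?thesis unfolding chern_def by simp
qed

lemma chern_Kdual_class_S_top:
  assumes "lex_first_basis \<B> \<sigma> \<subseteq> {0..n}"
  shows "chern n (int (card (lex_first_basis \<B> \<sigma>))) (Kdual (class_S n \<B>)) \<sigma> t
           = (\<Prod>i\<in>lex_first_basis \<B> \<sigma>. t i)"
  using assms finite_subset[OF assms finite_atLeastAtMost] coeff_prod_linear_top[of "lex_first_basis \<B> \<sigma>" t]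
  by (simp add: chern_Kdual_class_S)

lemma chern_Kdual_class_S_subtop:
  assumes "lex_first_basis \<B> \<sigma> \<subseteq> {0..n}"
  shows "chern n (int (card (lex_first_basis \<B> \<sigma>)) - 1) (Kdual (class_S n \<B>)) \<sigma> t
           = (\<Sum>b\<in>lex_first_basis \<B> \<sigma>. \<Prod>i\<in>lex_first_basis \<B> \<sigma> - {b}. t i)"
proof (cases "lex_first_basis \<B> \<sigma> = {}")
  case False
  moreover have fin: "finite (lex_first_basis \<B> \<sigma>)"
    using finite_subset[OF assms finite_atLeastAtMost] .
  ultimately have "card (lex_first_basis \<B> \<sigma>) \<noteq> 0" by simp
  then show ?thesis
    using assms fin False coeff_prod_linear_subtop[of "lex_first_basis \<B> \<sigma>" t]
    by (simp add: chern_Kdual_class_S nat_diff_distrib')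
qed (simp add: chern_def)

lemma chern_class_Q_top:
  "chern n (int (card ({0..n} - lex_first_basis \<B> \<sigma>))) (class_Q n \<B>) \<sigma> t
     = (-1) ^ card ({0..n} - lex_first_basis \<B> \<sigma>) * (\<Prod>i\<in>{0..n} - lex_first_basis \<B> \<sigma>. t i)"
  using coeff_prod_linear_top[of "{0..n} - lex_first_basis \<B> \<sigma>" "\<lambda>i. - t i"]
  by (simp add: chern_class_Q prod_uminus)

lemma chern_class_Q_subtop:
  "chern n (int (card ({0..n} - lex_first_basis \<B> \<sigma>)) - 1) (class_Q n \<B>) \<sigma> t
     = - ((-1) ^ card ({0..n} - lex_first_basis \<B> \<sigma>))
         * (\<Sum>b\<in>{0..n} - lex_first_basis \<B> \<sigma>. \<Prod>i\<in>{0..n} - lex_first_basis \<B> \<sigma> - {b}. t i)"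
proof (cases "{0..n} - lex_first_basis \<B> \<sigma> = {}")
  case True
  then show ?thesis unfolding True by (simp add: chern_def)
next
  case False
  define C where "C = {0..n} - lex_first_basis \<B> \<sigma>"
  have C: "finite C" "C \<noteq> {}" "card C \<noteq> 0" using False by (simp_all add: C_def)
  have "chern n (int (card C) - 1) (class_Q n \<B>) \<sigma> t = coeff (\<Prod>i\<in>C. [:1, - t i:]) (card C - 1)"
    using C by (simp add: chern_class_Q C_def nat_diff_distrib')
  also have "\<dots> = (\<Sum>b\<in>C. \<Prod>i\<in>C - {b}. - t i)"
    by (rule coeff_prod_linear_subtop[OF C(1,2)])
  also have "\<dots> = (\<Sum>b\<in>C. - ((-1) ^ card C) * (\<Prod>i\<in>C - {b}. t i))"
  proof (rule sum.cong)
    fix b assume "b \<in> C"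
    moreover have "(-1) ^ (card C - 1) = - ((-1) ^ card C :: real)"
      using C by (cases "card C") simp_all
    ultimately show "(\<Prod>i\<in>C - {b}. - t i) = - ((-1) ^ card C) * (\<Prod>i\<in>C - {b}. t i)"
      using C by (simp add: prod_uminus card_Diff_singleton)
  qed simp
  finally show ?thesis by (simp add: sum_distrib_left C_def)
qed

lemma sum_prod_remove_mult_prod_compl:
  fixes w :: "'a \<Rightarrow> 'b::comm_semiring_1"
  assumes "finite E" "S \<subseteq> E"
  shows "(\<Sum>b\<in>S. \<Prod>i\<in>S - {b}. w i) * (\<Prod>i\<in>E - S. w i) = (\<Sum>b\<in>S. \<Prod>i\<in>E - {b}. w i)"
  unfolding sum_distrib_right
proof (rule sum.cong)
  fix b assume "b \<in> S"
  then have "E - {b} = (S - {b}) \<union> (E - S)" using assms by auto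
  then have "(\<Prod>i\<in>E - {b}. w i) = (\<Prod>i\<in>(S - {b}) \<union> (E - S). w i)" by simp
  also have "\<dots> = (\<Prod>i\<in>S - {b}. w i) * (\<Prod>i\<in>E - S. w i)"
    using assms finite_subset by (intro prod.union_disjoint) auto
  finally show "(\<Prod>i\<in>S - {b}. w i) * (\<Prod>i\<in>E - S. w i) = (\<Prod>i\<in>E - {b}. w i)" ..
qed simp

lemma sum_mult_scaled_of_bool:
  fixes f :: "'a \<Rightarrow> 'b::comm_semiring_1"
  assumes "finite E"
  shows "(\<Sum>b\<in>E. f b * (c * of_bool (P b))) = c * (\<Sum>b\<in>{b\<in>E. P b}. f b)"
proof -
  have "f b * (c * of_bool (P b)) = c * (if P b then f b else 0)" for b
    by (simp add: mult.commute)
  then show ?thesis using assms by (simp add: sum.inter_filter sum_distrib_left)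
qed

lemma chern_product_lex_first_basis:
  assumes M: "matroid {0..n} \<B>" and r: "mrank \<B> {0..n} = r" and \<sigma>: "\<sigma> permutes {0..n}"
  shows "chern n (int r - 1) (Kdual (class_S n \<B>)) \<sigma> t * chern n (int (card {0..n}) - int r) (class_Q n \<B>) \<sigma> t
       = (\<Sum>b\<in>{0..n}. (\<Prod>j\<in>{0..n} - {b}. t j) * ((-1) ^ (n + 1 - r) * of_bool (b \<in> lex_first_basis \<B> \<sigma>)))"
proof -
  note B = lex_first_basis_subset_card[OF M permutes_bij[OF \<sigma>], unfolded r]
  define S C where "S = lex_first_basis \<B> \<sigma>" and "C = {0..n} - lex_first_basis \<B> \<sigma>"
  have card_C: "card C = n + 1 - r"
    using B finite_subset[OF B(1) finite_atLeastAtMost] by (simp add: card_Diff_subset C_def)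
  have degree: "int (card {0..n}) - int r = int (card C)"
    using card_C B card_mono[of "{0..n}" "lex_first_basis \<B> \<sigma>"] by (simp add: of_nat_diff)
  have S_subtop: "chern n (int r - 1) (Kdual (class_S n \<B>)) \<sigma> t = (\<Sum>b\<in>S. \<Prod>i\<in>S - {b}. t i)"
    using chern_Kdual_class_S_subtop[OF B(1), of t] unfolding B(2) S_def .
  have Q_top: "chern n (int (card {0..n}) - int r) (class_Q n \<B>) \<sigma> t = (-1) ^ (n + 1 - r) * (\<Prod>i\<in>C. t i)"
    using chern_class_Q_top[of n \<B> \<sigma> t] unfolding degree C_def[symmetric] card_C .
  have "(\<Sum>b\<in>S. \<Prod>i\<in>S - {b}. t i) * (\<Prod>i\<in>C. t i) = (\<Sum>b\<in>S. \<Prod>j\<in>{0..n} - {b}. t j)"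
    using sum_prod_remove_mult_prod_compl[of "{0..n}" S t] B(1) unfolding C_def S_def by simp
  moreover have "{b \<in> {0..n}. b \<in> S} = S" using B(1) by (auto simp: S_def)
  ultimately show ?thesis
    unfolding S_subtop Q_top sum_mult_scaled_of_bool[OF finite_atLeastAtMost] S_def[symmetric]
    by (simp add: mult_ac)
qed

lemma chern_product_lex_first_basis_compl:
  assumes M: "matroid {0..n} \<B>" and r: "mrank \<B> {0..n} = r" and \<sigma>: "\<sigma> permutes {0..n}"
  shows "chern n (int r) (Kdual (class_S n \<B>)) \<sigma> t * chern n (int (card {0..n}) - int r - 1) (class_Q n \<B>) \<sigma> t
       = (\<Sum>b\<in>{0..n}. (\<Prod>j\<in>{0..n} - {b}. t j) * (- ((-1) ^ (n + 1 - r)) * of_bool (b \<notin> lex_first_basis \<B> \<sigma>)))"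
proof -
  note B = lex_first_basis_subset_card[OF M permutes_bij[OF \<sigma>], unfolded r]
  define S C where "S = lex_first_basis \<B> \<sigma>" and "C = {0..n} - lex_first_basis \<B> \<sigma>"
  have card_C: "card C = n + 1 - r"
    using B finite_subset[OF B(1) finite_atLeastAtMost] by (simp add: card_Diff_subset C_def)
  have degree: "int (card {0..n}) - int r - 1 = int (card C) - 1"
    using card_C B card_mono[of "{0..n}" "lex_first_basis \<B> \<sigma>"] by (simp add: of_nat_diff)
  have S_top: "chern n (int r) (Kdual (class_S n \<B>)) \<sigma> t = (\<Prod>i\<in>S. t i)"
    using chern_Kdual_class_S_top[OF B(1), of t] unfolding B(2) S_def .
  have Q_subtop: "chern n (int (card {0..n}) - int r - 1) (class_Q n \<B>) \<sigma> t
      = - ((-1) ^ (n + 1 - r)) * (\<Sum>b\<in>C. \<Prod>i\<in>C - {b}. t i)"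
    using chern_class_Q_subtop[of n \<B> \<sigma> t] unfolding degree C_def[symmetric] card_C .
  have "{0..n} - C = S" using B by (auto simp: C_def S_def)
  then have "(\<Sum>b\<in>C. \<Prod>i\<in>C - {b}. t i) * (\<Prod>i\<in>S. t i) = (\<Sum>b\<in>C. \<Prod>j\<in>{0..n} - {b}. t j)"
    using sum_prod_remove_mult_prod_compl[of "{0..n}" C t] by (simp add: C_def)
  moreover have "{b \<in> {0..n}. b \<notin> S} = C" by (auto simp: C_def S_def)
  ultimately show ?thesis
    unfolding S_top Q_subtop sum_mult_scaled_of_bool[OF finite_atLeastAtMost] S_def[symmetric]
    by (simp add: mult_ac)
qed

lemma XE_integral_eq_lex_first_basis:
  fixes g :: "bool \<Rightarrow> real"
  assumes M: "matroid {0..n} \<B>"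
    and f: "\<And>\<sigma> t. \<sigma> permutes {0..n} \<Longrightarrow>
              f \<sigma> t = (\<Sum>b\<in>{0..n}. (\<Prod>j\<in>{0..n} - {b}. t j) * g (b \<in> lex_first_basis \<B> \<sigma>))"
    and v: "v = (-1) ^ n * (g False * of_bool (n = 0)
           - (g True - g False) * real_of_int (\<Sum>A\<in>Pow {0..n}. (-1) ^ card A * int (mrank \<B> A)))"
  shows "XE_integral_eq n f v"
  unfolding XE_integral_eq_def
proof (intro allI impI)
  fix t :: "nat \<Rightarrow> real" assume inj: "inj_on t {0..n}"
  define R where "R = (\<Sum>A\<in>Pow {0..n}. (-1) ^ card A * real (mrank \<B> A))"
  define K where "K = g False * of_bool (n = 0) - (g True - g False) * R"
  define h where "h b P = g False + (g True - g False) * (real (mrank \<B> (insert b P)) - real (mrank \<B> P))"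
    for b P
  have affine: "g x = g False + (g True - g False) * of_bool x" for x
    by (cases x) simp_all
  have integrand: "f \<sigma> t = (\<Sum>b\<in>{0..n}. (\<Prod>j\<in>{0..n} - {b}. t j) * h b (preceding \<sigma> b))"
    if "\<sigma> permutes {0..n}" for \<sigma>
    using mrank_insert_preceding[OF M permutes_bij[OF that]]
    by (simp add: f[OF that] h_def affine[of "_ \<in> lex_first_basis \<B> \<sigma>"])
  have alternating: "(\<Sum>P\<in>Pow ({0..n} - {b}). (-1) ^ card P * h b P) = K" if "b \<in> {0..n}" for b
    using sum_Pow_remove_alternating_affine[of "{0..n}" b "g False" "g True - g False" "\<lambda>A. real (mrank \<B> A)"]
      that by (auto simp: h_def K_def R_def)
  have "loc_integral n f t = (\<Sum>b\<in>{0..n}. (\<Prod>j\<in>{0..n} - {b}. t j) * K / (\<Prod>j\<in>{0..n} - {b}. t b - t j))"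
    using loc_integral_preceding[OF inj, of f "\<lambda>b. \<Prod>j\<in>{0..n} - {b}. t j" h] integrand
    by (simp add: alternating)
  also have "\<dots> = K * (\<Sum>b\<in>{0..n}. (\<Prod>j\<in>{0..n} - {b}. t j) / (\<Prod>j\<in>{0..n} - {b}. t b - t j))"
    by (simp add: sum_distrib_left algebra_simps)
  also have "\<dots> = K * (-1) ^ n"
    using sum_prod_div_prod_diff[of "{0..n}" t] inj by simp
  finally show "loc_integral n f t = v"
    by (simp add: v K_def R_def)
qed

lemma XE_integral_eq_beta:
  assumes M: "matroid {0..n} \<B>" and r: "mrank \<B> {0..n} = r"
  shows "XE_integral_eq n
           (\<lambda>\<sigma> t. chern n (int r - 1) (Kdual (class_S n \<B>)) \<sigma> t
                  * chern n (int (card {0..n}) - int r) (class_Q n \<B>) \<sigma> t)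
           (real_of_int (beta {0..n} \<B>))"
proof -
  define s :: real where "s = (-1) ^ (n + 1 - r)"
  have "r \<le> n + 1" using matroid_mrank_le_card[OF M] r by simp
  then have sign: "(-1) ^ n * (s * x) = - ((-1) ^ r * x)" for x
    by (simp add: s_def minus_one_power_iff)
  have beta: "beta {0..n} \<B> = (-1) ^ r * (\<Sum>A\<in>Pow {0..n}. (-1) ^ card A * int (mrank \<B> A))"
    using beta_eq_alternating_rank_sum[of "{0..n}" \<B>] M r unfolding matroid_def by auto
  show ?thesis
    by (rule XE_integral_eq_lex_first_basis[OF M, where g = "\<lambda>x. s * of_bool x"])
      (simp only: s_def chern_product_lex_first_basis[OF M r], simp add: beta sign)
qed

lemma XE_integral_eq_beta_dual:
  assumes M: "matroid {0..n} \<B>" and r: "mrank \<B> {0..n} = r"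
  shows "XE_integral_eq n
           (\<lambda>\<sigma> t. chern n (int r) (Kdual (class_S n \<B>)) \<sigma> t
                  * chern n (int (card {0..n}) - int r - 1) (class_Q n \<B>) \<sigma> t)
           (real_of_int (beta {0..n} (dual_matroid {0..n} \<B>)))"
proof -
  define R where "R = (\<Sum>A\<in>Pow {0..n}. (-1) ^ card A * int (mrank \<B> A))"
  define s :: real where "s = (-1) ^ (n + 1 - r)"
  have r_le: "r \<le> n + 1" using matroid_mrank_le_card[OF M] r by simp
  then have sign: "(-1) ^ n * (s * x) = - ((-1) ^ r * x)" for x
    by (simp add: s_def minus_one_power_iff)
  have "(-1) ^ (n + 1 - r) * of_bool (n = 0) = - ((-1) ^ r * of_bool (n = 0) :: int)"
    using r_le by (cases "n = 0") (auto simp: le_Suc_eq)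
  moreover have "beta {0..n} \<B> = (-1) ^ r * R"
    using beta_eq_alternating_rank_sum[of "{0..n}" \<B>] M r unfolding R_def matroid_def by auto
  ultimately have beta_dual: "beta {0..n} (dual_matroid {0..n} \<B>) = (-1) ^ r * (of_bool (n = 0) + R)"
    using beta_dual_matroid[OF M] r by (simp add: algebra_simps)
  show ?thesis
    by (rule XE_integral_eq_lex_first_basis[OF M, where g = "\<lambda>x. - s * of_bool (\<not> x)"])
      (simp only: s_def chern_product_lex_first_basis_compl[OF M r],
        simp add: beta_dual sign R_def right_diff_distrib distrib_left)
qed

theorem theorem6p2:
  fixes n r :: nat and \<B> :: "nat set set"
  assumes "matroid {0..n} \<B>"
    and "mrank \<B> {0..n} = r"
  shows "XE_integral_eq n
           (\<lambda>\<sigma> t. chern n (int r - 1) (Kdual (class_S n \<B>)) \<sigma> t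
                  * chern n (int (card {0..n}) - int r) (class_Q n \<B>) \<sigma> t)
           (real_of_int (beta {0..n} \<B>))
       \<and> XE_integral_eq n
           (\<lambda>\<sigma> t. chern n (int r) (Kdual (class_S n \<B>)) \<sigma> t
                  * chern n (int (card {0..n}) - int r - 1) (class_Q n \<B>) \<sigma> t)
           (real_of_int (beta {0..n} (dual_matroid {0..n} \<B>)))"
  using XE_integral_eq_beta[OF assms] XE_integral_eq_beta_dual[OF assms] by blast

end
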